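(* Let $1\le k\le n-1$, $\gamma=k/n$, and let $g\colon\{0,1\}^m\to\{0,1\}^n$ be a $(d,r)$-local function. Then $$\|g(\mathcal{U}^m)-\mathcal{D}_k\|\ge 1-2\sqrt{2n}\cdot\exp\left\{-\frac{\mathsf{err}(\gamma,d)^2\cdot r}{2}\right\}.$$
   Context: $\mathcal{U}^m$ is uniform on $\{0,1\}^m$; $\mathcal{D}_k$ is the uniform distribution on strings in $\{0,1\}^n$ of Hamming weight $k$. A function $g$ is $d$-local if each output bit depends on at most $d$ input bits; $I_g(i)$ is the set of input coordinates on which output bit $i$ depends. Output bits $i_1,\dots,i_r$ are non-connected if $I_g(i_1),\dots,I_g(i_r)$ are pairwise disjoint; $g$ is $(d,r)$-local if it is $d$-local and has $r$ non-connected output bits. $\mathsf{err}(\gamma,t)$ is the minimum distance of $\gamma$ to an integer multiple of $2^{-t}$. $\|\cdot\|$ is total variation distance. *)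

theory Defs
  imports "HOL-Probability.Probability"
begin

definition bitstrings :: "nat \<Rightarrow> bool list set" where
  "bitstrings m = {xs. length xs = m}"

definition hweight :: "bool list \<Rightarrow> nat" where
  "hweight xs = length (filter id xs)"

definition unif_bits :: "nat \<Rightarrow> bool list pmf" where
  "unif_bits m = pmf_of_set (bitstrings m)"

definition D_weight :: "nat \<Rightarrow> nat \<Rightarrow> bool list pmf" where
  "D_weight n k = pmf_of_set {ys \<in> bitstrings n. hweight ys = k}"

definition tvd :: "'a pmf \<Rightarrow> 'a pmf \<Rightarrow> real" where
  "tvd p q = (SUP A. \<bar>measure_pmf.prob p A - measure_pmf.prob q A\<bar>)"

definition dep_set :: "(bool list \<Rightarrow> bool list) \<Rightarrow> nat \<Rightarrow> nat \<Rightarrow> nat set" where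
  "dep_set g m i = {j. j < m \<and> (\<exists>x \<in> bitstrings m. g x ! i \<noteq> g (x[j := \<not> x ! j]) ! i)}"

definition d_local :: "(bool list \<Rightarrow> bool list) \<Rightarrow> nat \<Rightarrow> nat \<Rightarrow> nat \<Rightarrow> bool" where
  "d_local g m n d \<longleftrightarrow> (\<forall>i<n. card (dep_set g m i) \<le> d)"

definition dr_local :: "(bool list \<Rightarrow> bool list) \<Rightarrow> nat \<Rightarrow> nat \<Rightarrow> nat \<Rightarrow> nat \<Rightarrow> bool" where
  "dr_local g m n d r \<longleftrightarrow> d_local g m n d \<and>
     (\<exists>S. S \<subseteq> {..<n} \<and> card S = r \<and>
        (\<forall>i\<in>S. \<forall>i'\<in>S. i \<noteq> i' \<longrightarrow> dep_set g m i \<inter> dep_set g m i' = {}))"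

definition err :: "real \<Rightarrow> nat \<Rightarrow> real" where
  "err \<gamma> t = (INF j::int. \<bar>\<gamma> - real_of_int j / 2 ^ t\<bar>)"

end

theory Submission
  imports Defs
begin

text \<open>
  Restrict both distributions to the \<open>r\<close> output coordinates \<open>S\<close> whose dependency sets are
  pairwise disjoint. Under \<open>g(U\<^sup>m)\<close> these coordinates are independent bits, each equal to
  one with probability \<open>a / 2\<^sup>c\<close> for some \<open>c \<le> d\<close>, hence at distance at least
  \<open>err(\<gamma>, d)\<close> from \<open>\<gamma>\<close>. The restriction of \<open>D\<^sub>k\<close> is dominated pointwise by \<open>n + 1\<close>
  times the product of \<open>Bernoulli(\<gamma>)\<close> bits, because \<open>Bin(n, \<gamma>)\<close> puts mass at least
  \<open>1 / (n + 1)\<close> on its mode \<open>k\<close>. Now \<open>1 - \<parallel>P - Q\<parallel> = \<Sum> min(P, Q) \<le> \<Sum> \<surd>(P Q)\<close>, the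
  Bhattacharyya coefficient of two product distributions factorises over the coordinates,
  and for two Bernoulli distributions with parameters \<open>p, q\<close> it is at most
  \<open>exp(-(p - q)\<^sup>2 / 2)\<close>. Finally \<open>n + 1 \<le> 8 n\<close>.
\<close>

section \<open>Total variation distance\<close>

lemma prob_diff_le_tvd: "\<bar>measure_pmf.prob p A - measure_pmf.prob q A\<bar> \<le> tvd p q"
  unfolding tvd_def
proof (rule cSUP_upper)
  show "bdd_above (range (\<lambda>A. \<bar>measure_pmf.prob p A - measure_pmf.prob q A\<bar>))"
  proof (rule bdd_aboveI)
    fix x assume "x \<in> range (\<lambda>A. \<bar>measure_pmf.prob p A - measure_pmf.prob q A\<bar>)"
    then obtain B where "x = \<bar>measure_pmf.prob p B - measure_pmf.prob q B\<bar>" by auto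
    thus "x \<le> 1"
      using measure_pmf.prob_le_1[of p B] measure_pmf.prob_le_1[of q B]
        measure_nonneg[of p B] measure_nonneg[of q B] by linarith
  qed
qed auto

lemma tvd_map_pmf_le: "tvd (map_pmf h p) (map_pmf h q) \<le> tvd p q"
  unfolding tvd_def[of "map_pmf h p"]
  by (rule cSUP_least) (auto simp: prob_diff_le_tvd[of p "h -` _" q, simplified])

lemma one_minus_tvd_le_sum_min:
  assumes "finite F" "set_pmf p \<subseteq> F" "set_pmf q \<subseteq> F"
  shows "1 - tvd p q \<le> (\<Sum>z\<in>F. min (pmf p z) (pmf q z))"
proof -
  define B where "B = {z\<in>F. pmf p z > pmf q z}"
  have "finite B" using assms(1) by (simp add: B_def)
  hence "measure_pmf.prob p B - measure_pmf.prob q B = (\<Sum>z\<in>B. pmf p z - pmf q z)"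
    by (simp add: measure_measure_pmf_finite sum_subtractf)
  also have "\<dots> = (\<Sum>z\<in>F. pmf p z - min (pmf p z) (pmf q z))"
    using assms(1) by (intro sum.mono_neutral_cong_left) (auto simp: B_def)
  also have "\<dots> = 1 - (\<Sum>z\<in>F. min (pmf p z) (pmf q z))"
    using sum_pmf_eq_1[OF assms(1,2)] by (simp add: sum_subtractf)
  finally show ?thesis using prob_diff_le_tvd[of p B q] by linarith
qed

lemma one_minus_tvd_le_sum_sqrt:
  assumes "finite F" "set_pmf p \<subseteq> F" "set_pmf q \<subseteq> F" "0 \<le> C"
    and dom: "\<And>z. pmf q z \<le> C * pmf q' z"
  shows "1 - tvd p q \<le> sqrt C * (\<Sum>z\<in>F. sqrt (pmf p z * pmf q' z))"
proof -
  have "min (pmf p z) (pmf q z) \<le> sqrt C * sqrt (pmf p z * pmf q' z)" for z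
  proof -
    have "min (pmf p z) (pmf q z) \<le> sqrt (pmf p z * pmf q z)"
      by (rule real_le_rsqrt) (auto simp: power2_eq_square min_def intro: mult_mono)
    also have "\<dots> \<le> sqrt (pmf p z * (C * pmf q' z))"
      by (intro real_sqrt_le_mono mult_left_mono dom) auto
    finally show ?thesis by (simp add: real_sqrt_mult mult_ac)
  qed
  hence "(\<Sum>z\<in>F. min (pmf p z) (pmf q z)) \<le> (\<Sum>z\<in>F. sqrt C * sqrt (pmf p z * pmf q' z))"
    by (rule sum_mono)
  thus ?thesis
    using one_minus_tvd_le_sum_min[OF assms(1-3)] by (simp add: sum_distrib_left)
qed

lemma pmf_map_pmf_le:
  assumes "\<And>y. pmf p y \<le> C * pmf q y" "finite (set_pmf p)" "0 \<le> C"
  shows "pmf (map_pmf h p) z \<le> C * pmf (map_pmf h q) z"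
proof -
  let ?A = "h -` {z} \<inter> set_pmf p"
  have fin: "finite ?A" using assms(2) by auto
  have "pmf (map_pmf h p) z = measure_pmf.prob p ?A"
    by (simp add: pmf_map measure_Int_set_pmf)
  also have "\<dots> = (\<Sum>y\<in>?A. pmf p y)" using fin by (simp add: measure_measure_pmf_finite)
  also have "\<dots> \<le> (\<Sum>y\<in>?A. C * pmf q y)" by (intro sum_mono assms(1))
  also have "\<dots> = C * measure_pmf.prob q ?A"
    using fin by (simp add: measure_measure_pmf_finite sum_distrib_left)
  also have "\<dots> \<le> C * measure_pmf.prob q (h -` {z})"
    by (intro mult_left_mono measure_pmf.finite_measure_mono assms(3)) auto
  also have "\<dots> = C * pmf (map_pmf h q) z" by (simp add: pmf_map)
  finally show ?thesis .
qed


section \<open>Products of distributions\<close>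

lemma real_sqrt_prod: "sqrt (prod f A) = (\<Prod>x\<in>A. sqrt (f x))"
  by (induction A rule: infinite_finite_induct) (auto simp: real_sqrt_mult)

lemma sum_PiE_dflt_prod:
  fixes w :: "'i \<Rightarrow> 'b::finite \<Rightarrow> 'c::comm_semiring_1"
  assumes "finite S"
  shows "(\<Sum>z\<in>PiE_dflt S dflt (\<lambda>_. UNIV). \<Prod>i\<in>S. w i (z i)) = (\<Prod>i\<in>S. \<Sum>b\<in>UNIV. w i b)"
proof -
  let ?e = "\<lambda>h x. if x \<in> S then h x else dflt"
  have "inj_on ?e (PiE S (\<lambda>_. UNIV))"
    by (rule inj_onI) (simp add: fun_eq_iff PiE_def extensional_def, metis)
  hence "(\<Sum>z\<in>?e ` PiE S (\<lambda>_. UNIV). \<Prod>i\<in>S. w i (z i))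
      = (\<Sum>h\<in>PiE S (\<lambda>_. UNIV). \<Prod>i\<in>S. w i (h i))"
    by (subst sum.reindex) (auto intro!: sum.cong prod.cong)
  also have "\<dots> = (\<Prod>i\<in>S. \<Sum>b\<in>UNIV. w i b)"
    using assms by (intro prod_sum_PiE[symmetric]) auto
  finally show ?thesis by (simp add: dflt_image_PiE)
qed

lemma sum_sqrt_pmf_Pi_pmf:
  fixes p p' :: "'i \<Rightarrow> 'b::finite pmf"
  assumes "finite S"
  shows "(\<Sum>z\<in>PiE_dflt S dflt (\<lambda>_. UNIV). sqrt (pmf (Pi_pmf S dflt p) z * pmf (Pi_pmf S dflt p') z))
       = (\<Prod>i\<in>S. \<Sum>b\<in>UNIV. sqrt (pmf (p i) b * pmf (p' i) b))"
proof -
  have "sqrt (pmf (Pi_pmf S dflt p) z * pmf (Pi_pmf S dflt p') z)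
      = (\<Prod>i\<in>S. sqrt (pmf (p i) (z i) * pmf (p' i) (z i)))"
    if "z \<in> PiE_dflt S dflt (\<lambda>_. UNIV)" for z
    using that assms by (simp add: pmf_Pi' PiE_dflt_def prod.distrib[symmetric] real_sqrt_prod)
  thus ?thesis
    using sum_PiE_dflt_prod[OF assms] by (simp cong: sum.cong)
qed

lemma map_pmf_Pi_pmf_subset_eq:
  assumes "finite M" "M' \<subseteq> M" "D \<subseteq> M'"
    and dep: "\<And>f f'. (\<forall>x\<in>D. f x = f' x) \<Longrightarrow> \<phi> f = \<phi> f'"
  shows "map_pmf \<phi> (Pi_pmf M' dflt p) = map_pmf \<phi> (Pi_pmf M dflt p)"
proof -
  have "map_pmf \<phi> (Pi_pmf M' dflt p)
      = map_pmf (\<phi> \<circ> (\<lambda>f x. if x \<in> M' then f x else dflt)) (Pi_pmf M dflt p)"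
    using assms(1,2) by (simp add: Pi_pmf_subset[of M M'] pmf.map_comp)
  also have "\<dots> = map_pmf \<phi> (Pi_pmf M dflt p)"
    by (intro map_pmf_cong refl) (use assms(3) in \<open>auto intro!: dep\<close>)
  finally show ?thesis .
qed

lemma map_pmf_Pi_pmf_two_blocks:
  assumes "finite M" "D \<subseteq> M"
    and dep\<phi>: "\<And>f f'. (\<forall>x\<in>D. f x = f' x) \<Longrightarrow> \<phi> f = \<phi> f'"
    and dep\<psi>: "\<And>f f'. (\<forall>x\<in>M - D. f x = f' x) \<Longrightarrow> \<psi> f = \<psi> f'"
  shows "map_pmf (\<lambda>f. (\<phi> f, \<psi> f)) (Pi_pmf M dflt p)
       = pair_pmf (map_pmf \<phi> (Pi_pmf M dflt p)) (map_pmf \<psi> (Pi_pmf M dflt p))"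
proof -
  let ?P = "\<lambda>M. Pi_pmf M dflt p"
  let ?merge = "\<lambda>(a, b) x. if x \<in> D then a x else b x"
  have fin: "finite D" "finite (M - D)" using assms(1,2) finite_subset by auto
  have "?P M = ?P (D \<union> (M - D))" using assms(2) by (simp add: Un_absorb1)
  also have "\<dots> = map_pmf ?merge (pair_pmf (?P D) (?P (M - D)))"
    using fin by (intro Pi_pmf_union) auto
  finally have "map_pmf (\<lambda>f. (\<phi> f, \<psi> f)) (?P M)
      = map_pmf ((\<lambda>f. (\<phi> f, \<psi> f)) \<circ> ?merge) (pair_pmf (?P D) (?P (M - D)))"
    by (simp add: pmf.map_comp)
  also have "(\<lambda>f. (\<phi> f, \<psi> f)) \<circ> ?merge = (\<lambda>(a, b). (\<phi> a, \<psi> b))"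
    by (auto simp: fun_eq_iff intro!: dep\<phi> dep\<psi>)
  also have "map_pmf (\<lambda>(a, b). (\<phi> a, \<psi> b)) (pair_pmf (?P D) (?P (M - D)))
      = pair_pmf (map_pmf \<phi> (?P D)) (map_pmf \<psi> (?P (M - D)))"
    by (rule map_pair)
  also have "map_pmf \<phi> (?P D) = map_pmf \<phi> (?P M)"
    using assms by (intro map_pmf_Pi_pmf_subset_eq[where D = D]) auto
  also have "map_pmf \<psi> (?P (M - D)) = map_pmf \<psi> (?P M)"
    using assms by (intro map_pmf_Pi_pmf_subset_eq[where D = "M - D"]) auto
  finally show ?thesis .
qed

lemma map_pmf_Pi_pmf_disjoint_blocks:
  fixes \<phi> :: "'i \<Rightarrow> ('a \<Rightarrow> 'b) \<Rightarrow> 'c"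
  assumes "finite I" "finite M" "\<And>i. i \<in> I \<Longrightarrow> D i \<subseteq> M"
    and "\<And>i j. i \<in> I \<Longrightarrow> j \<in> I \<Longrightarrow> i \<noteq> j \<Longrightarrow> D i \<inter> D j = {}"
    and "\<And>i f f'. i \<in> I \<Longrightarrow> (\<forall>x\<in>D i. f x = f' x) \<Longrightarrow> \<phi> i f = \<phi> i f'"
  shows "map_pmf (\<lambda>f i. if i \<in> I then \<phi> i f else c) (Pi_pmf M dflt p)
       = Pi_pmf I c (\<lambda>i. map_pmf (\<phi> i) (Pi_pmf M dflt p))"
  using assms
proof (induction I rule: finite_induct)
  case empty
  then show ?case by (simp add: map_pmf_const)
next
  case (insert i I)
  let ?P = "Pi_pmf M dflt p"
  let ?G = "\<lambda>f j. if j \<in> I then \<phi> j f else c"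
  have "(\<lambda>f j. if j \<in> insert i I then \<phi> j f else c) = (\<lambda>(y, h). h(i := y)) \<circ> (\<lambda>f. (\<phi> i f, ?G f))"
    using insert.hyps by (auto simp: fun_eq_iff)
  hence "map_pmf (\<lambda>f j. if j \<in> insert i I then \<phi> j f else c) ?P
      = map_pmf (\<lambda>(y, h). h(i := y)) (map_pmf (\<lambda>f. (\<phi> i f, ?G f)) ?P)"
    by (simp add: pmf.map_comp)
  \<comment> \<open>All blocks \<open>j \<in> I\<close> lie in \<open>M - D i\<close>, so \<open>?G\<close> is independent of block \<open>i\<close>.\<close>
  also have "map_pmf (\<lambda>f. (\<phi> i f, ?G f)) ?P = pair_pmf (map_pmf (\<phi> i) ?P) (map_pmf ?G ?P)"
  proof (rule map_pmf_Pi_pmf_two_blocks)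
    fix f f' :: "'a \<Rightarrow> 'b" assume agree: "\<forall>x\<in>M - D i. f x = f' x"
    have "\<phi> j f = \<phi> j f'" if "j \<in> I" for j
      using that agree insert.hyps insert.prems(2)[of j] insert.prems(3)[of i j]
      by (intro insert.prems(4)) auto
    thus "?G f = ?G f'" by auto
  qed (use insert.prems in auto)
  also have "map_pmf ?G ?P = Pi_pmf I c (\<lambda>j. map_pmf (\<phi> j) ?P)"
    using insert.prems by (intro insert.IH) auto
  also have "map_pmf (\<lambda>(y, h). h(i := y)) (pair_pmf (map_pmf (\<phi> i) ?P) \<dots>)
      = Pi_pmf (insert i I) c (\<lambda>j. map_pmf (\<phi> j) ?P)"
    using insert.hyps by (intro Pi_pmf_insert[symmetric]) auto
  finally show ?case .
qed

lemma sum_sqrt_pmf_bool_le: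
  fixes p q :: "bool pmf"
  shows "(\<Sum>b\<in>UNIV. sqrt (pmf p b * pmf q b)) \<le> exp (- ((pmf p True - pmf q True)\<^sup>2 / 2))"
proof -
  define a b c e where "a = sqrt (pmf p True)" "b = sqrt (pmf p False)"
    "c = sqrt (pmf q True)" "e = sqrt (pmf q False)"
  have sq: "a\<^sup>2 + b\<^sup>2 = 1" "c\<^sup>2 + e\<^sup>2 = 1"
    by (simp_all add: a_b_c_e_def pmf_False_conv_True pmf_le_1)
  have diff: "pmf p True - pmf q True = (a*e - b*c) * (a*e + b*c)"
  proof -
    have "(a*e - b*c) * (a*e + b*c) = a\<^sup>2 * e\<^sup>2 - b\<^sup>2 * c\<^sup>2" by algebra
    also have "\<dots> = a\<^sup>2 - c\<^sup>2" using sq by algebra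
    finally show ?thesis by (simp add: a_b_c_e_def)
  qed
  \<comment> \<open>Both identities are Lagrange's \<open>(a\<^sup>2 + b\<^sup>2)(c\<^sup>2 + e\<^sup>2) = (ac \<pm> be)\<^sup>2 + (ae \<mp> bc)\<^sup>2\<close>.\<close>
  have lagrange: "(a*c + b*e)\<^sup>2 + (a*e - b*c)\<^sup>2 = 1" "(a*e + b*c)\<^sup>2 + (a*c - b*e)\<^sup>2 = 1"
    using sq by algebra+
  hence "(a*e + b*c)\<^sup>2 \<le> 1" using zero_le_power2[of "a*c - b*e"] by linarith
  hence "(pmf p True - pmf q True)\<^sup>2 \<le> (a*e - b*c)\<^sup>2"
    unfolding diff power_mult_distrib by (metis mult.right_neutral mult_left_mono zero_le_power2)
  with lagrange(1) have "(a*c + b*e)\<^sup>2 \<le> 1 - (pmf p True - pmf q True)\<^sup>2" by linarith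
  also have "\<dots> \<le> exp (- ((pmf p True - pmf q True)\<^sup>2))"
    using exp_ge_add_one_self[of "- ((pmf p True - pmf q True)\<^sup>2)"] by linarith
  also have "\<dots> = (exp (- ((pmf p True - pmf q True)\<^sup>2 / 2)))\<^sup>2"
    by (simp add: power2_eq_square exp_add[symmetric])
  finally have "a*c + b*e \<le> exp (- ((pmf p True - pmf q True)\<^sup>2 / 2))"
    by (rule power2_le_imp_le) simp
  thus ?thesis by (simp add: UNIV_bool a_b_c_e_def real_sqrt_mult)
qed

lemma one_minus_tvd_Pi_pmf_bernoulli_le:
  fixes q :: "'i \<Rightarrow> bool pmf"
  assumes "finite S" "0 \<le> \<gamma>" "\<gamma> \<le> 1" "0 \<le> \<epsilon>" "0 \<le> C"
    and bias: "\<And>i. i \<in> S \<Longrightarrow> \<epsilon> \<le> \<bar>\<gamma> - pmf (q i) True\<bar>"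
    and supp: "set_pmf Q \<subseteq> PiE_dflt S False (\<lambda>_. UNIV)"
    and dom: "\<And>z. pmf Q z \<le> C * pmf (Pi_pmf S False (\<lambda>_. bernoulli_pmf \<gamma>)) z"
  shows "1 - tvd (Pi_pmf S False q) Q \<le> sqrt C * exp (- (\<epsilon>\<^sup>2 * card S / 2))"
proof -
  let ?B = "\<lambda>i. \<Sum>b\<in>UNIV. sqrt (pmf (q i) b * pmf (bernoulli_pmf \<gamma>) b)"
  have "?B i \<le> exp (- (\<epsilon>\<^sup>2 / 2))" if "i \<in> S" for i
  proof -
    have "\<epsilon>\<^sup>2 \<le> \<bar>\<gamma> - pmf (q i) True\<bar>\<^sup>2"
      using bias[OF that] \<open>0 \<le> \<epsilon>\<close> by (rule power_mono)
    hence "\<epsilon>\<^sup>2 \<le> (pmf (q i) True - \<gamma>)\<^sup>2" by (simp add: power2_abs power2_commute)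
    have "?B i \<le> exp (- ((pmf (q i) True - \<gamma>)\<^sup>2 / 2))"
      using sum_sqrt_pmf_bool_le[of "q i" "bernoulli_pmf \<gamma>"] assms(2,3) by simp
    also have "\<dots> \<le> exp (- (\<epsilon>\<^sup>2 / 2))"
      using \<open>\<epsilon>\<^sup>2 \<le> (pmf (q i) True - \<gamma>)\<^sup>2\<close> by simp
    finally show ?thesis .
  qed
  hence "(\<Prod>i\<in>S. ?B i) \<le> (\<Prod>i\<in>S. exp (- (\<epsilon>\<^sup>2 / 2)))"
    by (intro prod_mono) (auto intro!: sum_nonneg)
  also have "\<dots> = exp (- (\<epsilon>\<^sup>2 * card S / 2))"
    by (simp add: exp_of_nat_mult[symmetric] mult_ac)
  finally have prod_le: "(\<Prod>i\<in>S. ?B i) \<le> exp (- (\<epsilon>\<^sup>2 * card S / 2))" .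
  have "set_pmf (Pi_pmf S False q) \<subseteq> PiE_dflt S False (\<lambda>_. UNIV)"
    using set_Pi_pmf_subset[OF assms(1), of False q] by (auto simp: PiE_dflt_def)
  hence "1 - tvd (Pi_pmf S False q) Q \<le> sqrt C * (\<Sum>z\<in>PiE_dflt S False (\<lambda>_. UNIV).
           sqrt (pmf (Pi_pmf S False q) z * pmf (Pi_pmf S False (\<lambda>_. bernoulli_pmf \<gamma>)) z))"
    using assms(1) by (intro one_minus_tvd_le_sum_sqrt[OF _ _ supp \<open>0 \<le> C\<close> dom]) auto
  also have "\<dots> = sqrt C * (\<Prod>i\<in>S. ?B i)"
    by (simp only: sum_sqrt_pmf_Pi_pmf[OF assms(1)])
  also have "\<dots> \<le> sqrt C * exp (- (\<epsilon>\<^sup>2 * card S / 2))"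
    using \<open>0 \<le> C\<close> by (intro mult_left_mono prod_le) simp
  finally show ?thesis .
qed


section \<open>The mode of the binomial distribution\<close>

lemma Suc_times_binomial_Suc: "Suc j * (n choose Suc j) = (n - j) * (n choose j)"
proof (cases n)
  case (Suc n')
  have "Suc j * (Suc n' choose Suc j) = Suc n' * (n' choose j)" by (rule Suc_times_binomial)
  moreover have "(Suc n' - j) * (Suc n' choose j) = Suc n' * ((Suc n' - 1) choose j)"
    by (rule binomial_absorb_comp)
  ultimately show ?thesis using Suc by simp
qed simp

text \<open>The unnormalised binomial weights \<open>a\<^sub>j = C(n, j) k\<^sup>j (n - k)\<^sup>n\<^sup>-\<^sup>j\<close> satisfy
  \<open>a\<^sub>j\<^sub>+\<^sub>1 / a\<^sub>j = (n - j) k / ((j + 1)(n - k))\<close>, which is \<open>\<ge> 1\<close> exactly for \<open>j < k\<close>.\<close>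

lemma binomial_weight_le_mode:
  fixes n k j :: nat
  assumes "1 \<le> k" "k < n" "j \<le> n"
  shows "(n choose j) * k^j * (n-k)^(n-j) \<le> (n choose k) * k^k * (n-k)^(n-k)"
proof -
  define a where "a j = (n choose j) * k^j * (n-k)^(n-j)" for j
  have rec: "a (Suc j) * (Suc j * (n - k)) = a j * ((n - j) * k)" if "j < n" for j
  proof -
    have "a (Suc j) * (Suc j * (n - k))
        = (Suc j * (n choose Suc j)) * k^j * k * ((n-k)^(n - Suc j) * (n - k))"
      by (simp only: a_def power_Suc mult_ac)
    also have "(n-k)^(n - Suc j) * (n - k) = (n-k)^(n-j)"
      using that by (simp add: Suc_diff_Suc[symmetric] power_Suc2)
    finally show ?thesis by (simp only: a_def Suc_times_binomial_Suc mult_ac)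
  qed
  have up: "a j \<le> a (Suc j)" if "j < k" for j
  proof -
    have "Suc j * (n - k) \<le> (n - j) * k"
      using that by (metis mult.commute mult_le_mono Suc_leI diff_le_mono2 less_imp_le)
    hence "a j * (Suc j * (n - k)) \<le> a (Suc j) * (Suc j * (n - k))"
      using rec[of j] that assms by simp
    thus ?thesis using assms by simp
  qed
  have down: "a (Suc j) \<le> a j" if "k \<le> j" "j < n" for j
  proof -
    have "(n - j) * k \<le> (n - k) * Suc j"
      using that by (intro mult_le_mono) auto
    hence "a (Suc j) * (Suc j * (n - k)) \<le> a j * (Suc j * (n - k))"
      using rec[of j] that by (metis mult.commute mult_le_mono2)
    thus ?thesis using assms by simp
  qed
  have "a j \<le> a k"
  proof (cases "j \<le> k")
    case True
    thus ?thesis by (induction j rule: inc_induct) (auto intro: order_trans[OF up])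
  next
    case False
    hence "k \<le> j" by simp
    thus ?thesis using \<open>j \<le> n\<close> by (induction j rule: dec_induct) (auto intro: order_trans[OF down])
  qed
  thus ?thesis by (simp add: a_def)
qed

lemma pmf_binomial_ratio:
  fixes n k j :: nat
  assumes "k \<le> n" "j \<le> n"
  shows "pmf (binomial_pmf n (k / n)) j = (n choose j) * k^j * (n-k)^(n-j) / real n ^ n"
proof -
  have "1 - real k / n = (n - k) / n" if "0 < n" using assms that by (simp add: field_simps of_nat_diff)
  hence "pmf (binomial_pmf n (k / n)) j = (n choose j) * (k / n)^j * ((n - k) / n)^(n-j)"
    using assms by (cases "n = 0") auto
  also have "\<dots> = (n choose j) * k^j * (n-k)^(n-j) / (real n ^ j * real n ^ (n - j))"
    by (simp add: power_divide)
  also have "real n ^ j * real n ^ (n - j) = real n ^ n"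
    using assms by (simp add: power_add[symmetric])
  finally show ?thesis .
qed

lemma pmf_binomial_mode_ge:
  fixes n k :: nat
  assumes "1 \<le> k" "k < n"
  shows "1 \<le> real (n + 1) * pmf (binomial_pmf n (k / n)) k"
proof -
  let ?b = "binomial_pmf n (k / n)"
  have "1 = (\<Sum>j\<le>n. pmf ?b j)"
    using assms by (intro sum_pmf_eq_1[symmetric]) auto
  also have "\<dots> \<le> (\<Sum>j\<le>n. pmf ?b k)"
  proof (intro sum_mono)
    fix j assume "j \<in> {..n}"
    hence "real ((n choose j) * k^j * (n-k)^(n-j)) / real n ^ n
        \<le> real ((n choose k) * k^k * (n-k)^(n-k)) / real n ^ n"
      by (intro divide_right_mono of_nat_le_iff[THEN iffD2] binomial_weight_le_mode[OF assms]) auto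
    thus "pmf ?b j \<le> pmf ?b k"
      using pmf_binomial_ratio[of k n j] pmf_binomial_ratio[of k n k] assms \<open>j \<in> {..n}\<close> by simp
  qed
  also have "\<dots> = real (n + 1) * pmf ?b k" by simp
  finally show ?thesis .
qed


section \<open>Distributions on bit strings\<close>

definition bernoulli_bits :: "nat \<Rightarrow> real \<Rightarrow> bool list pmf" where
  "bernoulli_bits n p = map_pmf (\<lambda>f. map f [0..<n]) (Pi_pmf {..<n} False (\<lambda>_. bernoulli_pmf p))"

text \<open>The restriction of a string to the coordinates in \<open>S\<close>, as a function that is \<open>False\<close>
  off \<open>S\<close>, matching the default value of \<open>Pi_pmf S False\<close>.\<close>

definition restrict_bits :: "nat set \<Rightarrow> bool list \<Rightarrow> nat \<Rightarrow> bool" where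
  "restrict_bits S y = (\<lambda>i. if i \<in> S then y ! i else False)"

lemma finite_bitstrings: "finite (bitstrings n)"
proof -
  have "bitstrings n = {xs. set xs \<subseteq> (UNIV :: bool set) \<and> length xs = n}"
    by (auto simp: bitstrings_def)
  thus ?thesis using finite_lists_length_eq[of "UNIV :: bool set" n] by simp
qed

lemma hweight_eq_card: "hweight xs = card {i. i < length xs \<and> xs ! i}"
  by (simp add: hweight_def length_filter_conv_card)

lemma bij_betw_map_upt_bitstrings:
  "bij_betw (\<lambda>f. map f [0..<n]) (PiE_dflt {..<n} False (\<lambda>_. UNIV)) (bitstrings n)"
  by (rule bij_betwI[of _ _ _ "\<lambda>xs j. if j < n then xs ! j else False"])
     (auto simp: PiE_dflt_def bitstrings_def fun_eq_iff intro: nth_equalityI)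

lemma unif_bits_eq_bernoulli_bits: "unif_bits m = bernoulli_bits m (1 / 2)"
proof -
  have "bernoulli_bits m (1 / 2)
      = map_pmf (\<lambda>f. map f [0..<m]) (pmf_of_set (PiE_dflt {..<m} False (\<lambda>_. UNIV)))"
    by (simp add: bernoulli_bits_def bernoulli_pmf_half_conv_pmf_of_set Pi_pmf_of_set)
  also have "\<dots> = unif_bits m"
    unfolding unif_bits_def
    by (rule map_pmf_of_set_bij_betw[OF bij_betw_map_upt_bitstrings]) (fastforce simp: PiE_dflt_def, auto)
  finally show ?thesis ..
qed

lemma pmf_bernoulli_bits:
  assumes "0 \<le> \<gamma>" "\<gamma> \<le> 1" "y \<in> bitstrings n"
  shows "pmf (bernoulli_bits n \<gamma>) y = \<gamma> ^ hweight y * (1 - \<gamma>) ^ (n - hweight y)"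
proof -
  let ?B = "Pi_pmf {..<n} False (\<lambda>_. bernoulli_pmf \<gamma>)"
  define f where "f = (\<lambda>j. if j < n then y ! j else False)"
  have len: "length y = n" using assms(3) by (simp add: bitstrings_def)
  have inj: "inj_on (\<lambda>f. map f [0..<n]) (PiE_dflt {..<n} False (\<lambda>_. UNIV))"
    using bij_betw_map_upt_bitstrings by (rule bij_betw_imp_inj_on)
  have "set_pmf ?B \<subseteq> PiE_dflt {..<n} False (\<lambda>_. UNIV)"
    using set_Pi_pmf_subset[of "{..<n}" False] by (auto simp: PiE_dflt_def)
  moreover have "f \<in> PiE_dflt {..<n} False (\<lambda>_. UNIV)" "map f [0..<n] = y"
    using len by (auto simp: f_def PiE_dflt_def intro: nth_equalityI)
  ultimately have "(\<lambda>f. map f [0..<n]) -` {y} \<inter> set_pmf ?B = {f} \<inter> set_pmf ?B"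
    using inj by (auto dest: inj_onD)
  hence "pmf (bernoulli_bits n \<gamma>) y = pmf ?B f"
    unfolding bernoulli_bits_def pmf_map
    by (metis measure_Int_set_pmf measure_pmf_single)
  also have "\<dots> = (\<Prod>j<n. if y ! j then \<gamma> else 1 - \<gamma>)"
    using assms(1,2) by (subst pmf_Pi') (auto simp: f_def intro!: prod.cong)
  also have "\<dots> = \<gamma> ^ card {j. j < n \<and> y ! j} * (1 - \<gamma>) ^ card {j. j < n \<and> \<not> y ! j}"
    by (simp add: prod.If_cases Int_def conj_commute)
  also have "card {j. j < n \<and> \<not> y ! j} = n - card {j. j < n \<and> y ! j}"
  proof -
    have "{j. j < n \<and> \<not> y ! j} = {..<n} - {j. j < n \<and> y ! j}" by auto
    also have "card \<dots> = n - card {j. j < n \<and> y ! j}"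
      by (subst card_Diff_subset) auto
    finally show ?thesis .
  qed
  finally show ?thesis by (simp add: hweight_eq_card len)
qed

lemma prob_hweight_bernoulli_bits:
  assumes "0 \<le> \<gamma>" "\<gamma> \<le> 1"
  shows "measure_pmf.prob (bernoulli_bits n \<gamma>) {ys \<in> bitstrings n. hweight ys = k}
       = pmf (binomial_pmf n \<gamma>) k"
proof -
  let ?B = "Pi_pmf {..<n} False (\<lambda>_. bernoulli_pmf \<gamma>)"
  have "measure_pmf.prob (bernoulli_bits n \<gamma>) {ys \<in> bitstrings n. hweight ys = k}
      = measure_pmf.prob (map_pmf (\<lambda>f. card {x\<in>{..<n}. f x}) ?B) {k}"
    by (simp add: bernoulli_bits_def vimage_def bitstrings_def hweight_eq_card cong: conj_cong)
  also have "map_pmf (\<lambda>f. card {x\<in>{..<n}. f x}) ?B = binomial_pmf n \<gamma>"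
    using assms by (intro binomial_pmf_altdef'[symmetric]) auto
  finally show ?thesis by (simp add: measure_pmf_single)
qed

lemma bitstrings_hweight_nonempty:
  assumes "k \<le> n"
  shows "{ys \<in> bitstrings n. hweight ys = k} \<noteq> {}"
proof -
  have "replicate k True @ replicate (n - k) False \<in> {ys \<in> bitstrings n. hweight ys = k}"
    using assms by (simp add: bitstrings_def hweight_def)
  thus ?thesis by blast
qed

lemma set_pmf_D_weight:
  assumes "k \<le> n"
  shows "set_pmf (D_weight n k) = {ys \<in> bitstrings n. hweight ys = k}"
  unfolding D_weight_def using finite_bitstrings bitstrings_hweight_nonempty[OF assms]
  by (intro set_pmf_of_set) auto

text \<open>Both distributions are uniform on the strings of weight \<open>k\<close>, and \<open>Bin(n, k/n)\<close>
  gives this set mass at least \<open>1 / (n + 1)\<close>.\<close>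

lemma pmf_D_weight_le_bernoulli_bits:
  assumes "1 \<le> k" "k < n"
  shows "pmf (D_weight n k) y \<le> real (n + 1) * pmf (bernoulli_bits n (k / n)) y"
proof -
  define W where "W = {ys \<in> bitstrings n. hweight ys = k}"
  define c :: real where "c = (k / n) ^ k * (1 - k / n) ^ (n - k)"
  have fin: "finite W" using finite_bitstrings by (simp add: W_def)
  have ne: "W \<noteq> {}" using bitstrings_hweight_nonempty assms by (simp add: W_def)
  have pmf_W: "pmf (bernoulli_bits n (k / n)) ys = c" if "ys \<in> W" for ys
    using that assms by (simp add: W_def c_def pmf_bernoulli_bits)
  have "real (card W) * c = measure_pmf.prob (bernoulli_bits n (k / n)) W"
    using fin pmf_W by (simp add: measure_measure_pmf_finite)
  also have "\<dots> = pmf (binomial_pmf n (k / n)) k"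
    using assms unfolding W_def by (intro prob_hweight_bernoulli_bits) auto
  finally have "1 \<le> real (n + 1) * (real (card W) * c)"
    using pmf_binomial_mode_ge[OF assms] by simp
  hence "1 / real (card W) \<le> real (n + 1) * c"
    using fin ne by (simp add: field_simps card_gt_0_iff)
  thus ?thesis
    using fin ne pmf_W by (cases "y \<in> W") (auto simp: D_weight_def W_def[symmetric])
qed

lemma map_restrict_bits_bernoulli_bits:
  assumes "S \<subseteq> {..<n}"
  shows "map_pmf (restrict_bits S) (bernoulli_bits n \<gamma>) = Pi_pmf S False (\<lambda>_. bernoulli_pmf \<gamma>)"
proof -
  have "map_pmf (restrict_bits S) (bernoulli_bits n \<gamma>)
      = map_pmf (\<lambda>f x. if x \<in> S then f x else False) (Pi_pmf {..<n} False (\<lambda>_. bernoulli_pmf \<gamma>))"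
    unfolding bernoulli_bits_def pmf.map_comp
    using assms by (intro map_pmf_cong) (auto simp: restrict_bits_def fun_eq_iff)
  also have "\<dots> = Pi_pmf S False (\<lambda>_. bernoulli_pmf \<gamma>)"
    using assms by (intro Pi_pmf_subset[symmetric]) auto
  finally show ?thesis .
qed

lemma pmf_restrict_bits_D_weight_le:
  assumes "S \<subseteq> {..<n}" "1 \<le> k" "k < n"
  shows "pmf (map_pmf (restrict_bits S) (D_weight n k)) z
       \<le> real (n + 1) * pmf (Pi_pmf S False (\<lambda>_. bernoulli_pmf (k / n))) z"
proof -
  have "finite (set_pmf (D_weight n k))"
    using assms(3) finite_bitstrings by (simp add: set_pmf_D_weight)
  with assms(2,3) have "pmf (map_pmf (restrict_bits S) (D_weight n k)) z
      \<le> real (n + 1) * pmf (map_pmf (restrict_bits S) (bernoulli_bits n (k / n))) z"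
    by (intro pmf_map_pmf_le pmf_D_weight_le_bernoulli_bits) auto
  thus ?thesis by (simp add: map_restrict_bits_bernoulli_bits[OF assms(1)])
qed

lemma restrict_bits_in_PiE_dflt: "restrict_bits S y \<in> PiE_dflt S False (\<lambda>_. UNIV)"
  by (simp add: restrict_bits_def PiE_dflt_def)


section \<open>Local functions\<close>

lemma output_bit_eq_if_agree_on_dep_set:
  assumes "length x = m" "length y = m" "\<forall>j\<in>dep_set g m i. x ! j = y ! j"
  shows "g x ! i = g y ! i"
proof -
  define N where "N = card {j. j < m \<and> x ! j \<noteq> y ! j}"
  from N_def assms(1,3) show ?thesis
  proof (induction N arbitrary: x)
    case 0
    hence "x = y" using assms(2) by (auto intro: nth_equalityI)
    thus ?case by simp
  next
    case (Suc N x)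
    then obtain j where j: "j < m" "x ! j \<noteq> y ! j"
      by (metis (mono_tags, lifting) Collect_empty_eq card.empty nat.distinct(1))
    \<comment> \<open>Flipping a coordinate outside the dependency set makes \<open>x\<close> agree with \<open>y\<close> there.\<close>
    let ?x' = "x[j := \<not> x ! j]"
    have "j \<notin> dep_set g m i" using Suc.prems(3) j by auto
    hence "g x ! i = g ?x' ! i"
      using j(1) Suc.prems(2) unfolding dep_set_def bitstrings_def by blast
    also have "\<dots> = g y ! i"
    proof (rule Suc.IH)
      have "{j'. j' < m \<and> ?x' ! j' \<noteq> y ! j'} = {j'. j' < m \<and> x ! j' \<noteq> y ! j'} - {j}"
        using j Suc.prems(2) by (auto simp: nth_list_update)
      hence "card {j'. j' < m \<and> ?x' ! j' \<noteq> y ! j'} = card {j'. j' < m \<and> x ! j' \<noteq> y ! j'} - 1"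
        using j by (simp add: card_Diff_singleton)
      thus "N = card {j'. j' < m \<and> ?x' ! j' \<noteq> y ! j'}"
        using Suc.prems(1) by (metis diff_Suc_1)
      show "length ?x' = m" using Suc.prems(2) by simp
      show "\<forall>j'\<in>dep_set g m i. ?x' ! j' = y ! j'"
        using Suc.prems(3) \<open>j \<notin> dep_set g m i\<close> by (metis nth_list_update_neq)
    qed
    finally show ?case .
  qed
qed

lemma output_bit_depends_on_dep_set:
  assumes "\<forall>j\<in>dep_set g m i. f j = f' j"
  shows "g (map f [0..<m]) ! i = g (map f' [0..<m]) ! i"
  using assms by (intro output_bit_eq_if_agree_on_dep_set) (auto simp: dep_set_def)

lemma map_restrict_bits_disjoint_outputs:
  assumes "finite S"
    and disj: "\<forall>i\<in>S. \<forall>i'\<in>S. i \<noteq> i' \<longrightarrow> dep_set g m i \<inter> dep_set g m i' = {}"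
  shows "map_pmf (restrict_bits S) (map_pmf g (unif_bits m))
       = Pi_pmf S False (\<lambda>i. map_pmf (\<lambda>x. g x ! i) (unif_bits m))"
proof -
  let ?P = "Pi_pmf {..<m} False (\<lambda>_. bernoulli_pmf (1 / 2))"
  define \<phi> where "\<phi> i f = g (map f [0..<m]) ! i" for i f
  have "map_pmf (restrict_bits S) (map_pmf g (unif_bits m))
      = map_pmf (\<lambda>f i. if i \<in> S then \<phi> i f else False) ?P"
    by (simp add: unif_bits_eq_bernoulli_bits bernoulli_bits_def pmf.map_comp o_def
        restrict_bits_def \<phi>_def)
  also have "\<dots> = Pi_pmf S False (\<lambda>i. map_pmf (\<phi> i) ?P)"
    using assms unfolding \<phi>_def
    by (intro map_pmf_Pi_pmf_disjoint_blocks[where D = "dep_set g m"] output_bit_depends_on_dep_set)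
       (auto simp: dep_set_def)
  also have "\<dots> = Pi_pmf S False (\<lambda>i. map_pmf (\<lambda>x. g x ! i) (unif_bits m))"
    by (simp add: unif_bits_eq_bernoulli_bits bernoulli_bits_def pmf.map_comp o_def \<phi>_def[abs_def])
  finally show ?thesis .
qed

text \<open>Only the \<open>card (dep_set g m i)\<close> uniform bits on the dependency set matter.\<close>

lemma pmf_output_bit_dyadic:
  obtains a :: nat
  where "pmf (map_pmf (\<lambda>x. g x ! i) (unif_bits m)) True = a / 2 ^ card (dep_set g m i)"
proof -
  let ?D = "dep_set g m i"
  let ?X = "PiE_dflt ?D False (\<lambda>_. UNIV :: bool set)"
  define \<phi> where "\<phi> f = g (map f [0..<m]) ! i" for f
  have fin: "finite ?D" by (rule finite_subset[of _ "{..<m}"]) (auto simp: dep_set_def)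
  have finX: "finite ?X" using fin by auto
  have neX: "?X \<noteq> {}" by (auto simp: PiE_dflt_def)
  have "map_pmf (\<lambda>x. g x ! i) (unif_bits m)
      = map_pmf \<phi> (Pi_pmf {..<m} False (\<lambda>_. pmf_of_set UNIV))"
    by (simp add: unif_bits_eq_bernoulli_bits bernoulli_bits_def bernoulli_pmf_half_conv_pmf_of_set
        pmf.map_comp o_def \<phi>_def[abs_def])
  also have "\<dots> = map_pmf \<phi> (Pi_pmf ?D False (\<lambda>_. pmf_of_set UNIV))"
    unfolding \<phi>_def
    by (intro map_pmf_Pi_pmf_subset_eq[symmetric, where D = ?D] output_bit_depends_on_dep_set)
       (auto simp: dep_set_def)
  also have "Pi_pmf ?D False (\<lambda>_. pmf_of_set UNIV) = pmf_of_set ?X"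
    using fin by (intro Pi_pmf_of_set) auto
  finally have "pmf (map_pmf (\<lambda>x. g x ! i) (unif_bits m)) True = card (?X \<inter> \<phi> -` {True}) / card ?X"
    using finX neX by (simp add: pmf_map measure_pmf_of_set)
  also have "card ?X = 2 ^ card ?D"
    using fin by (subst card_PiE_dflt) auto
  finally show thesis using that by simp
qed

lemma err_nonneg: "0 \<le> err \<gamma> t"
  unfolding err_def by (rule cINF_greatest) auto

lemma err_le_dyadic:
  assumes "c \<le> d"
  shows "err \<gamma> d \<le> \<bar>\<gamma> - real a / 2 ^ c\<bar>"
proof -
  have "(2::real) ^ d = 2 ^ (d - c) * 2 ^ c" using assms by (simp add: power_add[symmetric])
  hence "real a / 2 ^ c = real_of_int (int (a * 2 ^ (d - c))) / 2 ^ d" by simp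
  moreover have "err \<gamma> d \<le> \<bar>\<gamma> - real_of_int (int (a * 2 ^ (d - c))) / 2 ^ d\<bar>"
    unfolding err_def by (rule cINF_lower) (auto intro: bdd_belowI[where m = 0])
  ultimately show ?thesis by simp
qed

lemma err_le_output_bit_bias:
  assumes "card (dep_set g m i) \<le> d"
  shows "err \<gamma> d \<le> \<bar>\<gamma> - pmf (map_pmf (\<lambda>x. g x ! i) (unif_bits m)) True\<bar>"
proof -
  obtain a :: nat
    where "pmf (map_pmf (\<lambda>x. g x ! i) (unif_bits m)) True = a / 2 ^ card (dep_set g m i)"
    by (rule pmf_output_bit_dyadic)
  thus ?thesis using assms by (simp add: err_le_dyadic)
qed


theorem mainTheorem6:
  fixes n m k d r :: nat and g :: "bool list \<Rightarrow> bool list"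
  assumes "1 \<le> k" and "k \<le> n - 1"
    and "\<forall>x \<in> bitstrings m. length (g x) = n"
    and "dr_local g m n d r"
  shows "tvd (map_pmf g (unif_bits m)) (D_weight n k)
           \<ge> 1 - 2 * sqrt (2 * real n) *
               exp (- (err (real k / real n) d ^ 2 * real r / 2))"
proof -
  have kn: "1 \<le> k" "k < n" using assms(1,2) by auto
  obtain S where S: "S \<subseteq> {..<n}" "card S = r"
    and disj: "\<forall>i\<in>S. \<forall>i'\<in>S. i \<noteq> i' \<longrightarrow> dep_set g m i \<inter> dep_set g m i' = {}"
    using assms(4) unfolding dr_local_def by blast
  have "finite S" using S(1) finite_subset by blast
  let ?\<gamma> = "real k / real n" and ?\<epsilon> = "err (real k / real n) d"
  have bias: "?\<epsilon> \<le> \<bar>?\<gamma> - pmf (map_pmf (\<lambda>x. g x ! i) (unif_bits m)) True\<bar>" if "i \<in> S" for i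
    using assms(4) S(1) that by (intro err_le_output_bit_bias) (auto simp: dr_local_def d_local_def)
  have "1 - tvd (map_pmf g (unif_bits m)) (D_weight n k)
      \<le> 1 - tvd (map_pmf (restrict_bits S) (map_pmf g (unif_bits m)))
               (map_pmf (restrict_bits S) (D_weight n k))"
    using tvd_map_pmf_le by (rule diff_left_mono)
  also have "\<dots> \<le> sqrt (real (n + 1)) * exp (- (?\<epsilon>\<^sup>2 * r / 2))"
    unfolding map_restrict_bits_disjoint_outputs[OF \<open>finite S\<close> disj] S(2)[symmetric] using kn
    by (intro one_minus_tvd_Pi_pmf_bernoulli_le[where \<gamma> = ?\<gamma>] bias pmf_restrict_bits_D_weight_le S(1) \<open>finite S\<close>)
       (auto simp: err_nonneg restrict_bits_in_PiE_dflt)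
  also have "\<dots> \<le> 2 * sqrt (2 * real n) * exp (- (?\<epsilon>\<^sup>2 * r / 2))"
  proof (rule mult_right_mono)
    have "sqrt (real (n + 1)) \<le> sqrt (2\<^sup>2 * (2 * real n))" using kn by (intro real_sqrt_le_mono) simp
    also have "\<dots> = 2 * sqrt (2 * real n)" unfolding real_sqrt_mult real_sqrt_abs by simp
    finally show "sqrt (real (n + 1)) \<le> 2 * sqrt (2 * real n)" .
  qed simp
  finally show ?thesis by linarith
qed

end
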